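(* Let $n\geq3$ and let $S_n$ act on $V=\mathbb{C}^n$ by its natural permutation representation. The subspace of $(H^{2,1}\oplus H^{2,0})^{S_n}$ consisting of elements supported only on the identity is one-dimensional, with basis $\sum_{1\leq i<j\leq n}(e_i-e_j)\otimes e_i^*\wedge e_j^*\otimes 1$.
   Context: $S_n$ acts by $\sigma e_i=e_{\sigma(i)}$; $e_i^*$ is the dual basis. For $g\in S_n$, let $V^g$ be its fixed space, $(V^g)^\perp$ its orthogonal complement (standard bilinear form), $c_g=\operatorname{codim}V^g$; identify $(V^g)^*$ with functionals vanishing on $(V^g)^\perp$ and $((V^g)^* )^\perp$ with functionals vanishing on $V^g$. Set $H^{2,d}_g=S^d(V^g)\otimes\bigwedge^{2-c_g}(V^g)^*\otimes\bigwedge^{c_g}((V^g)^* )^\perp\otimes\mathbb{C}g\subseteq S^d(V)\otimes\bigwedge^2V^*\otimes\mathbb{C}g$ (zero if $2-c_g<0$), and $H^{2,d}=\bigoplus_gH^{2,d}_g$, with $S_n$ acting diagonally ($h\cdot(f\otimes\omega\otimes g)=hf\otimes h\omega\otimes hgh^{-1}$). An element is supported only on the identity if all its components for $g\neq1$ vanish. (Note $H^{2,d}_1=S^d(V)\otimes\bigwedge^2V^*\otimes\mathbb{C}1$.) *)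

theory Defs
  imports Complex_Main "HOL-Combinatorics.Permutations"
begin

text \<open>Model: V = C^n with standard basis e_0,...,e_{n-1}. Vectors and dual vectors are
  coefficient functions nat => complex vanishing outside {..<n}. A dual vector phi
  acts by phi(v) = sum_{a<n} phi a * v a (the standard bilinear form).
  Lambda^2 V^* is realised as antisymmetric bilinear forms (coefficient functions
  nat => nat => complex); an element of V (x) Lambda^2 V^* as nat => nat => nat => complex
  (first argument = vector index). S^0(V) = C and S^1(V) = V.
  Elements of the direct sums over g in S_n are functions on permutations.\<close>

definition vecs :: "nat \<Rightarrow> (nat \<Rightarrow> complex) set" where
  "vecs n = {v. \<forall>a. n \<le> a \<longrightarrow> v a = 0}"

definition bil :: "nat \<Rightarrow> (nat \<Rightarrow> complex) \<Rightarrow> (nat \<Rightarrow> complex) \<Rightarrow> complex" where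
  "bil n u v = (\<Sum>a<n. u a * v a)"

text \<open>fixed space V^g (g e_a = e_{g a}, so g v = v iff v (g a) = v a for all a)\<close>
definition fixed_space :: "nat \<Rightarrow> (nat \<Rightarrow> nat) \<Rightarrow> (nat \<Rightarrow> complex) set" where
  "fixed_space n g = {v \<in> vecs n. \<forall>a<n. v (g a) = v a}"

definition perp :: "nat \<Rightarrow> (nat \<Rightarrow> complex) set \<Rightarrow> (nat \<Rightarrow> complex) set" where
  "perp n W = {u \<in> vecs n. \<forall>w\<in>W. bil n u w = 0}"

definition ann :: "nat \<Rightarrow> (nat \<Rightarrow> complex) set \<Rightarrow> (nat \<Rightarrow> complex) set" where
  "ann n W = {phi \<in> vecs n. \<forall>w\<in>W. bil n phi w = 0}"

text \<open>(V^g)^* = functionals vanishing on (V^g)^perp; ((V^g)^*)^perp = functionals vanishing on V^g\<close>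
definition fixed_dual :: "nat \<Rightarrow> (nat \<Rightarrow> nat) \<Rightarrow> (nat \<Rightarrow> complex) set" where
  "fixed_dual n g = ann n (perp n (fixed_space n g))"

definition fixed_dual_perp :: "nat \<Rightarrow> (nat \<Rightarrow> nat) \<Rightarrow> (nat \<Rightarrow> complex) set" where
  "fixed_dual_perp n g = ann n (fixed_space n g)"

text \<open>c_g = codim V^g = n - (number of orbits of g on {..<n}) (dim V^g = number of orbits)\<close>
definition codim_fix :: "nat \<Rightarrow> (nat \<Rightarrow> nat) \<Rightarrow> nat" where
  "codim_fix n g = n - card ((\<lambda>a. {b. b < n \<and> (\<exists>k. (g ^^ k) a = b)}) ` {..<n})"

definition wedge :: "(nat \<Rightarrow> complex) \<Rightarrow> (nat \<Rightarrow> complex) \<Rightarrow> nat \<Rightarrow> nat \<Rightarrow> complex" where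
  "wedge phi psi = (\<lambda>a b. phi a * psi b - phi b * psi a)"

text \<open>generators phi \<and> psi of Lambda^{2-c}(V^g)^* (x) Lambda^c((V^g)^*)^perp (zero if c > 2)\<close>
definition wedge_gens :: "nat \<Rightarrow> (nat \<Rightarrow> nat) \<Rightarrow> (nat \<Rightarrow> nat \<Rightarrow> complex) set" where
  "wedge_gens n g = (let c = codim_fix n g in
     if c \<le> 2 then {wedge phi psi | phi psi.
        phi \<in> (if c = 2 then fixed_dual_perp n g else fixed_dual n g) \<and>
        psi \<in> (if c = 0 then fixed_dual n g else fixed_dual_perp n g)}
     else {})"

definition span2 :: "(nat \<Rightarrow> nat \<Rightarrow> complex) set \<Rightarrow> (nat \<Rightarrow> nat \<Rightarrow> complex) set" where
  "span2 G = {f. \<exists>m (c::nat \<Rightarrow> complex) t. (\<forall>i<m. t i \<in> G) \<and>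
                 f = (\<lambda>a b. \<Sum>i<m. c i * t i a b)}"

definition span3 :: "(nat \<Rightarrow> nat \<Rightarrow> nat \<Rightarrow> complex) set \<Rightarrow> (nat \<Rightarrow> nat \<Rightarrow> nat \<Rightarrow> complex) set" where
  "span3 G = {f. \<exists>m (c::nat \<Rightarrow> complex) t. (\<forall>i<m. t i \<in> G) \<and>
                 f = (\<lambda>k a b. \<Sum>i<m. c i * t i k a b)}"

text \<open>H^{2,0}_g = S^0(V^g) (x) ... = C (x) Lambda-part\<close>
definition H20g :: "nat \<Rightarrow> (nat \<Rightarrow> nat) \<Rightarrow> (nat \<Rightarrow> nat \<Rightarrow> complex) set" where
  "H20g n g = span2 (wedge_gens n g)"

text \<open>H^{2,1}_g = S^1(V^g) (x) ... = V^g (x) Lambda-part\<close>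
definition H21g :: "nat \<Rightarrow> (nat \<Rightarrow> nat) \<Rightarrow> (nat \<Rightarrow> nat \<Rightarrow> nat \<Rightarrow> complex) set" where
  "H21g n g = span3 {(\<lambda>k a b. p k * w a b) | p w. p \<in> fixed_space n g \<and> w \<in> wedge_gens n g}"

definition H20 :: "nat \<Rightarrow> ((nat \<Rightarrow> nat) \<Rightarrow> nat \<Rightarrow> nat \<Rightarrow> complex) set" where
  "H20 n = {x. \<forall>g. (g permutes {..<n} \<longrightarrow> x g \<in> H20g n g) \<and>
                   (\<not> g permutes {..<n} \<longrightarrow> x g = (\<lambda>a b. 0))}"

definition H21 :: "nat \<Rightarrow> ((nat \<Rightarrow> nat) \<Rightarrow> nat \<Rightarrow> nat \<Rightarrow> nat \<Rightarrow> complex) set" where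
  "H21 n = {x. \<forall>g. (g permutes {..<n} \<longrightarrow> x g \<in> H21g n g) \<and>
                   (\<not> g permutes {..<n} \<longrightarrow> x g = (\<lambda>k a b. 0))}"

text \<open>diagonal action: h e_k = e_{h k}, h e_a^* = e_{h a}^*, h g h^{-1} on the group part\<close>
definition invariant20 :: "nat \<Rightarrow> ((nat \<Rightarrow> nat) \<Rightarrow> nat \<Rightarrow> nat \<Rightarrow> complex) \<Rightarrow> bool" where
  "invariant20 n x = (\<forall>h g. h permutes {..<n} \<longrightarrow>
      x (h \<circ> g \<circ> inv h) = (\<lambda>a b. x g (inv h a) (inv h b)))"

definition invariant21 :: "nat \<Rightarrow> ((nat \<Rightarrow> nat) \<Rightarrow> nat \<Rightarrow> nat \<Rightarrow> nat \<Rightarrow> complex) \<Rightarrow> bool" where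
  "invariant21 n x = (\<forall>h g. h permutes {..<n} \<longrightarrow>
      x (h \<circ> g \<circ> inv h) = (\<lambda>k a b. x g (inv h k) (inv h a) (inv h b)))"

definition unitvec :: "nat \<Rightarrow> nat \<Rightarrow> complex" where
  "unitvec i = (\<lambda>a. if a = i then 1 else 0)"

definition basis_elem :: "nat \<Rightarrow> (nat \<Rightarrow> nat) \<Rightarrow> nat \<Rightarrow> nat \<Rightarrow> nat \<Rightarrow> complex" where
  "basis_elem n = (\<lambda>g k a b. if g = id then
      (\<Sum>(i, j) \<in> {(i, j). i < j \<and> j < n}.
          (unitvec i k - unitvec j k) * wedge (unitvec i) (unitvec j) a b)
    else 0)"

end

(* At the identity every conjugation acts trivially on the group part, so an invariant element
   supported on 1 amounts to an element of V \<otimes> \<Lambda>\<^sup>2V\<^sup>* \<oplus> \<Lambda>\<^sup>2V\<^sup>* whose coefficients are invariant under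
   simultaneous permutation of all indices.  An invariant alternating form w vanishes, since the
   transposition (a b) gives w b a = w a b.  An invariant f in V \<otimes> \<Lambda>\<^sup>2V\<^sup>* has f k a b = 0 for
   k \<notin> {a, b} by the same argument, and since S_n is transitive on ordered pairs of distinct
   indices, f a a b = - f b a b = f 0 0 1.  These are exactly the coefficients of the sum over
   i < j of (e_i - e_j) \<otimes> e_i\<^sup>* \<and> e_j\<^sup>*. *)

theory Submission
  imports Defs
begin

(* alt_form n w: w \<in> \<Lambda>\<^sup>2V\<^sup>*;  vec_alt_form n f: f \<in> V \<otimes> \<Lambda>\<^sup>2V\<^sup>*, with the vector index first. *)

definition alt_form :: "nat \<Rightarrow> (nat \<Rightarrow> nat \<Rightarrow> complex) \<Rightarrow> bool" where
  "alt_form n w \<longleftrightarrow> (\<forall>a b. (n \<le> a \<or> n \<le> b) \<longrightarrow> w a b = 0) \<and> (\<forall>a b. w a b = - w b a)"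

definition vec_alt_form :: "nat \<Rightarrow> (nat \<Rightarrow> nat \<Rightarrow> nat \<Rightarrow> complex) \<Rightarrow> bool" where
  "vec_alt_form n f \<longleftrightarrow> (\<forall>k. alt_form n (f k)) \<and> (\<forall>k. n \<le> k \<longrightarrow> f k = (\<lambda>a b. 0))"

definition diff_tensor :: "nat \<Rightarrow> nat \<Rightarrow> nat \<Rightarrow> nat \<Rightarrow> complex" where
  "diff_tensor n k a b = (if a < n \<and> b < n then unitvec a k - unitvec b k else 0)"

lemma alt_form_vanishes: "alt_form n w \<Longrightarrow> n \<le> a \<or> n \<le> b \<Longrightarrow> w a b = 0"
  unfolding alt_form_def by blast

lemma alt_form_antisym: "alt_form n w \<Longrightarrow> w a b = - w b a"
  unfolding alt_form_def by blast

lemma alt_form_wedge: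
  assumes "phi \<in> vecs n" "psi \<in> vecs n"
  shows "alt_form n (wedge phi psi)"
  using assms by (auto simp: alt_form_def vecs_def wedge_def)

lemma alt_form_scale: "alt_form n w \<Longrightarrow> alt_form n (\<lambda>a b. c * w a b)"
  unfolding alt_form_def by (metis mult_zero_right mult_minus_right)

lemma alt_form_lincomb:
  assumes "\<And>i. i < m \<Longrightarrow> alt_form n (t i)"
  shows "alt_form n (\<lambda>a b. \<Sum>i<m. c i * t i a b)"
proof -
  have "(\<Sum>i<m. c i * t i a b) = 0" if "n \<le> a \<or> n \<le> b" for a b
    using alt_form_vanishes[OF assms that] by simp
  moreover have "(\<Sum>i<m. c i * t i a b) = - (\<Sum>i<m. c i * t i b a)" for a b
  proof -
    have "(\<Sum>i<m. c i * t i a b) = (\<Sum>i<m. - (c i * t i b a))"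
      using alt_form_antisym[OF assms, of _ a b] by (intro sum.cong) auto
    then show ?thesis
      by (simp add: sum_negf)
  qed
  ultimately show ?thesis
    unfolding alt_form_def by blast
qed

lemma wedge_gens_subset:
  "wedge_gens n g \<subseteq> {wedge phi psi | phi psi. phi \<in> vecs n \<and> psi \<in> vecs n}"
proof -
  have "fixed_dual n g \<subseteq> vecs n" "fixed_dual_perp n g \<subseteq> vecs n"
    by (auto simp: fixed_dual_def fixed_dual_perp_def ann_def)
  then show ?thesis
    unfolding wedge_gens_def Let_def by (simp split: if_split) blast
qed

lemma alt_form_wedge_gens: "w \<in> wedge_gens n g \<Longrightarrow> alt_form n w"
  using wedge_gens_subset alt_form_wedge by blast

lemma alt_form_H20g:
  assumes "w \<in> H20g n g"
  shows "alt_form n w"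
proof -
  obtain m :: nat and c t where gens: "\<forall>i<m. t i \<in> wedge_gens n g"
    and w: "w = (\<lambda>a b. \<Sum>i<m. c i * t i a b)"
    using assms unfolding H20g_def span2_def by auto
  have "alt_form n (t i)" if "i < m" for i
    using gens that alt_form_wedge_gens by blast
  then show ?thesis
    unfolding w by (rule alt_form_lincomb)
qed

lemma vec_alt_form_H21g:
  assumes "f \<in> H21g n g"
  shows "vec_alt_form n f"
proof -
  obtain m :: nat and c t where gens: "\<forall>i<m. t i \<in> {(\<lambda>k a b. p k * w a b) | p w.
      p \<in> fixed_space n g \<and> w \<in> wedge_gens n g}"
    and f: "f = (\<lambda>k a b. \<Sum>i<m. c i * t i k a b)"
    using assms unfolding H21g_def span3_def mem_Collect_eq by blast
  have t: "alt_form n (t i k) \<and> (n \<le> k \<longrightarrow> t i k = (\<lambda>a b. 0))" if im: "i < m" for i k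
  proof -
    obtain p w where t_eq: "t i = (\<lambda>k a b. p k * w a b)"
      and "p \<in> fixed_space n g" "w \<in> wedge_gens n g"
      using gens im by blast
    then have "alt_form n (\<lambda>a b. p k * w a b)" "n \<le> k \<longrightarrow> p k = 0"
      by (auto simp: alt_form_scale alt_form_wedge_gens fixed_space_def vecs_def)
    then show ?thesis
      by (simp add: t_eq)
  qed
  have "alt_form n (f k)" for k
    using alt_form_lincomb[of m n "\<lambda>i. t i k" c] t by (simp add: f)
  moreover have "f k = (\<lambda>a b. 0)" if "n \<le> k" for k
    using t that by (simp add: f)
  ultimately show ?thesis
    by (simp add: vec_alt_form_def)
qed

lemma codim_fix_id: "codim_fix n id = 0"
proof -
  have "(\<lambda>a. {b. b < n \<and> (\<exists>k. (id ^^ k) a = b)}) ` {..<n} = (\<lambda>a. {a}) ` {..<n}"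
    by (rule image_cong) auto
  moreover have "card ((\<lambda>a. {a}) ` {..<n}) = n"
    by (subst card_image) (auto simp: inj_on_def)
  ultimately show ?thesis
    unfolding codim_fix_def by simp
qed

lemma bil_unitvec: "i < n \<Longrightarrow> bil n u (unitvec i) = u i"
  by (simp add: bil_def unitvec_def if_distrib cong: if_cong)

lemma unitvec_in_vecs: "i < n \<Longrightarrow> unitvec i \<in> vecs n"
  by (auto simp: vecs_def unitvec_def)

lemma perp_fixed_space_id: "perp n (fixed_space n id) = {\<lambda>a. 0}"
proof -
  have "u = (\<lambda>a. 0)" if u: "u \<in> perp n (fixed_space n id)" for u
  proof (rule ext)
    fix a
    show "u a = 0"
    proof (cases "a < n")
      case True
      then have "unitvec a \<in> fixed_space n id"
        by (simp add: fixed_space_def unitvec_in_vecs)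
      then show ?thesis
        using u True by (auto simp: perp_def bil_unitvec)
    next
      case False
      then show ?thesis
        using u by (auto simp: perp_def vecs_def)
    qed
  qed
  moreover have "(\<lambda>a. 0) \<in> perp n (fixed_space n id)"
    by (simp add: perp_def vecs_def bil_def)
  ultimately show ?thesis
    by blast
qed

lemma unitvec_in_fixed_dual_id: "i < n \<Longrightarrow> unitvec i \<in> fixed_dual n id"
  by (auto simp: fixed_dual_def perp_fixed_space_id ann_def unitvec_in_vecs bil_def)

lemma wedge_unitvec_in_wedge_gens_id:
  "i < n \<Longrightarrow> j < n \<Longrightarrow> wedge (unitvec i) (unitvec j) \<in> wedge_gens n id"
  using unitvec_in_fixed_dual_id by (auto simp: wedge_gens_def codim_fix_id)

lemma sum_in_span3:
  assumes "finite A" "\<And>p. p \<in> A \<Longrightarrow> t p \<in> G"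
  shows "(\<lambda>k a b. \<Sum>p\<in>A. c p * t p k a b) \<in> span3 G"
proof -
  obtain h where h: "bij_betw h {..<card A} A"
    using ex_bij_betw_nat_finite[OF assms(1)] by (auto simp: atLeast0LessThan)
  then have "(\<Sum>p\<in>A. c p * t p k a b) = (\<Sum>i<card A. c (h i) * t (h i) k a b)" for k a b
    using sum.reindex_bij_betw[OF h, of "\<lambda>p. c p * t p k a b"] by simp
  moreover have "t (h i) \<in> G" if "i < card A" for i
    using bij_betwE[OF h] that assms(2) by auto
  ultimately show ?thesis
    unfolding span3_def
    by (auto intro!: exI[of _ "card A"] exI[of _ "\<lambda>i. c (h i)"] exI[of _ "\<lambda>i. t (h i)"])
qed

lemma basis_elem_nonid: "g \<noteq> id \<Longrightarrow> basis_elem n g = (\<lambda>k a b. 0)"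
  unfolding basis_elem_def by simp

lemma basis_elem_id_summand:
  assumes "i < j"
  shows "(unitvec i k - unitvec j k) * wedge (unitvec i) (unitvec j) a b
    = (if (i, j) = (a, b) then unitvec a k - unitvec b k else 0)
      + (if (i, j) = (b, a) then unitvec a k - unitvec b k else 0)"
  using assms by (simp add: unitvec_def wedge_def)

lemma basis_elem_id: "basis_elem n id = diff_tensor n"
proof (intro ext)
  fix k a b
  let ?v = "unitvec a k - unitvec b k"
  have "basis_elem n id k a b = (\<Sum>(i, j)\<in>{(i, j). i < j \<and> j < n}.
      (unitvec i k - unitvec j k) * wedge (unitvec i) (unitvec j) a b)"
    by (simp add: basis_elem_def)
  also have "\<dots> = (\<Sum>p\<in>{(i, j). i < j \<and> j < n}.
      (if p = (a, b) then ?v else 0) + (if p = (b, a) then ?v else 0))"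
    by (intro sum.cong refl)
      (auto simp only: basis_elem_id_summand mem_Collect_eq split: prod.splits)
  also have "\<dots> = diff_tensor n k a b"
  proof -
    have "finite {(i, j). i < j \<and> j < n}"
      by (rule finite_subset[of _ "{..<n} \<times> {..<n}"]) auto
    then show ?thesis
      by (simp only: sum.distrib sum.delta) (auto simp: diff_tensor_def)
  qed
  finally show "basis_elem n id k a b = diff_tensor n k a b" .
qed

lemma diff_tensor_permute:
  assumes "\<sigma> permutes {..<n}"
  shows "diff_tensor n (\<sigma> k) (\<sigma> a) (\<sigma> b) = diff_tensor n k a b"
proof -
  have "\<sigma> x < n \<longleftrightarrow> x < n" for x
    using permutes_in_image[OF assms] by simp
  moreover have "unitvec (\<sigma> x) (\<sigma> y) = unitvec x y" for x y
    using permutes_inj[OF assms] by (simp add: unitvec_def inj_eq)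
  ultimately show ?thesis
    by (simp add: diff_tensor_def)
qed

lemma conj_eq_id_iff:
  assumes "bij h"
  shows "h \<circ> g \<circ> inv h = id \<longleftrightarrow> g = id"
proof
  assume "h \<circ> g \<circ> inv h = id"
  then have "inv h \<circ> (h \<circ> g \<circ> inv h) \<circ> h = id"
    using assms by (simp add: bij_is_inj bij_is_surj surj_iff)
  then show "g = id"
    using assms by (simp add: o_assoc bij_is_inj bij_is_surj surj_iff)
qed (use assms in \<open>metis bij_is_surj surj_iff comp_id\<close>)

lemma ex_permutes_pair_to_0_1:
  fixes n :: nat
  assumes "a < n" "b < n" "a \<noteq> b"
  obtains \<sigma> where "\<sigma> permutes {..<n}" "\<sigma> a = 0" "\<sigma> b = 1"
proof
  define b' where "b' = transpose a 0 b"
  have "b' \<noteq> 0" "b' < n"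
    using assms by (auto simp: b'_def transpose_def)
  have "1 < n"
    using assms by linarith
  let ?\<sigma> = "transpose b' 1 \<circ> transpose a 0"
  show "?\<sigma> permutes {..<n}"
    using assms \<open>b' < n\<close> \<open>1 < n\<close> by (intro permutes_compose permutes_swap_id) auto
  show "?\<sigma> a = 0" "?\<sigma> b = 1"
    using \<open>b' \<noteq> 0\<close> by (auto simp: b'_def)
qed

lemma invariant21_at_id:
  assumes "invariant21 n x" "\<sigma> permutes {..<n}"
  shows "x id (\<sigma> k) (\<sigma> a) (\<sigma> b) = x id k a b"
proof -
  have "x (\<sigma> \<circ> id \<circ> inv \<sigma>) = (\<lambda>k a b. x id (inv \<sigma> k) (inv \<sigma> a) (inv \<sigma> b))"
    using assms unfolding invariant21_def by blast
  then have "x (\<sigma> \<circ> id \<circ> inv \<sigma>) (\<sigma> k) (\<sigma> a) (\<sigma> b)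
      = x id (inv \<sigma> (\<sigma> k)) (inv \<sigma> (\<sigma> a)) (inv \<sigma> (\<sigma> b))"
    by simp
  then show ?thesis
    by (simp add: permutes_inverses[OF assms(2)] permutes_inv_o[OF assms(2)])
qed

lemma invariant20_at_id:
  assumes "invariant20 n x" "\<sigma> permutes {..<n}"
  shows "x id (\<sigma> a) (\<sigma> b) = x id a b"
proof -
  have "x (\<sigma> \<circ> id \<circ> inv \<sigma>) = (\<lambda>a b. x id (inv \<sigma> a) (inv \<sigma> b))"
    using assms unfolding invariant20_def by blast
  then have "x (\<sigma> \<circ> id \<circ> inv \<sigma>) (\<sigma> a) (\<sigma> b) = x id (inv \<sigma> (\<sigma> a)) (inv \<sigma> (\<sigma> b))"
    by simp
  then show ?thesis
    by (simp add: permutes_inverses[OF assms(2)] permutes_inv_o[OF assms(2)])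
qed

lemma invariant_alt_form_eq_0:
  assumes "alt_form n w" "\<And>\<sigma> a b. \<sigma> permutes {..<n} \<Longrightarrow> w (\<sigma> a) (\<sigma> b) = w a b"
  shows "w a b = 0"
proof (cases "a < n \<and> b < n")
  case True
  then have "transpose a b permutes {..<n}"
    by (intro permutes_swap_id) auto
  then have "w b a = w a b"
    using assms(2)[of "transpose a b" a b] by simp
  then show ?thesis
    using alt_form_antisym[OF assms(1), of a b] by simp
next
  case False
  then show ?thesis
    using alt_form_vanishes[OF assms(1)] by auto
qed

lemma invariant_vec_alt_form_eq:
  assumes "vec_alt_form n f"
    and invariant: "\<And>\<sigma> k a b. \<sigma> permutes {..<n} \<Longrightarrow> f (\<sigma> k) (\<sigma> a) (\<sigma> b) = f k a b"
  shows "f k a b = f 0 0 1 * diff_tensor n k a b"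
proof -
  have alt: "alt_form n (f k)" for k
    using assms(1) by (simp add: vec_alt_form_def)
  have orbit: "f a a b = f 0 0 1" if ab: "a < n" "b < n" "a \<noteq> b" for a b
  proof -
    obtain \<sigma> where "\<sigma> permutes {..<n}" "\<sigma> a = 0" "\<sigma> b = 1"
      by (rule ex_permutes_pair_to_0_1[OF ab])
    then show ?thesis
      using invariant[of \<sigma> a a b] by simp
  qed
  consider "a = b" | "\<not> (a < n \<and> b < n)" | "a < n" "b < n" "a \<noteq> b" "k = a"
    | "a < n" "b < n" "a \<noteq> b" "k = b" | "a < n" "b < n" "k \<noteq> a" "k \<noteq> b"
    by blast
  then show ?thesis
  proof cases
    case 1
    then show ?thesis
      using alt_form_antisym[OF alt[of k], of a a] by (simp add: diff_tensor_def)
  next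
    case 2
    then show ?thesis
      using alt_form_vanishes[OF alt[of k], of a b] by (auto simp: diff_tensor_def)
  next
    case 3
    then show ?thesis
      using orbit[of a b] by (simp add: diff_tensor_def unitvec_def)
  next
    case 4
    then show ?thesis
      using orbit[of b a] alt_form_antisym[OF alt[of b], of a b]
      by (simp add: diff_tensor_def unitvec_def)
  next
    case 5
    then have "transpose a b permutes {..<n}"
      by (intro permutes_swap_id) auto
    then have "f k b a = f k a b"
      using invariant[of "transpose a b" k a b] 5 by simp
    then show ?thesis
      using 5 alt_form_antisym[OF alt[of k], of a b] by (simp add: diff_tensor_def unitvec_def)
  qed
qed

lemma H21_supported_on_id_eq:
  assumes "x \<in> H21 n" "invariant21 n x" "\<forall>g. g \<noteq> id \<longrightarrow> x g = (\<lambda>k a b. 0)"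
  shows "x = (\<lambda>g k a b. x id 0 0 1 * basis_elem n g k a b)"
proof (intro ext)
  fix g k a b
  show "x g k a b = x id 0 0 1 * basis_elem n g k a b"
  proof (cases "g = id")
    case True
    have "vec_alt_form n (x id)"
      using assms(1) permutes_id unfolding H21_def by (blast intro: vec_alt_form_H21g)
    then show ?thesis
      using invariant_vec_alt_form_eq invariant21_at_id[OF assms(2)]
      by (simp add: True basis_elem_id)
  next
    case False
    then show ?thesis
      using assms(3) by (simp add: basis_elem_nonid)
  qed
qed

lemma H20_supported_on_id_eq:
  assumes "x \<in> H20 n" "invariant20 n x" "\<forall>g. g \<noteq> id \<longrightarrow> x g = (\<lambda>a b. 0)"
  shows "x = (\<lambda>g a b. 0)"
proof (intro ext)
  fix g a b
  show "x g a b = 0"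
  proof (cases "g = id")
    case True
    have "alt_form n (x id)"
      using assms(1) permutes_id unfolding H20_def by (blast intro: alt_form_H20g)
    then show ?thesis
      using invariant_alt_form_eq_0 invariant20_at_id[OF assms(2)] by (simp add: True)
  next
    case False
    then show ?thesis
      using assms(3) by simp
  qed
qed

lemma basis_elem_id_in_H21g:
  "(\<lambda>k a b. c * basis_elem n id k a b) \<in> H21g n id"
proof -
  define P where "P = {(i, j). i < j \<and> j < n}"
  define t where "t p = (\<lambda>k a b. (unitvec (fst p) k - unitvec (snd p) k)
    * wedge (unitvec (fst p)) (unitvec (snd p)) a b)" for p :: "nat \<times> nat"
  have "finite P"
    unfolding P_def by (rule finite_subset[of _ "{..<n} \<times> {..<n}"]) auto
  moreover have "t p \<in> {(\<lambda>k a b. p k * w a b) | p w. p \<in> fixed_space n id \<and> w \<in> wedge_gens n id}"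
    if "p \<in> P" for p
  proof -
    let ?u = "\<lambda>k. unitvec (fst p) k - unitvec (snd p) k"
    let ?w = "wedge (unitvec (fst p)) (unitvec (snd p))"
    have "?u \<in> fixed_space n id"
      using that by (auto simp: P_def fixed_space_def vecs_def unitvec_def)
    moreover have "?w \<in> wedge_gens n id"
      using that by (auto simp: P_def intro: wedge_unitvec_in_wedge_gens_id)
    moreover have "t p = (\<lambda>k a b. ?u k * ?w a b)"
      by (simp add: t_def)
    ultimately show ?thesis
      unfolding mem_Collect_eq by (intro exI[of _ ?u] exI[of _ ?w]) simp
  qed
  ultimately have "(\<lambda>k a b. \<Sum>p\<in>P. c * t p k a b) \<in> H21g n id"
    unfolding H21g_def by (rule sum_in_span3)
  moreover have "(\<lambda>k a b. \<Sum>p\<in>P. c * t p k a b) = (\<lambda>k a b. c * basis_elem n id k a b)"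
    by (simp add: basis_elem_def P_def t_def sum_distrib_left split_def)
  ultimately show ?thesis
    by simp
qed

lemma zero_in_H21g: "(\<lambda>k a b. 0) \<in> H21g n g"
  unfolding H21g_def span3_def by (auto intro!: exI[of _ 0])

lemma zero_in_H20g: "(\<lambda>a b. 0) \<in> H20g n g"
  unfolding H20g_def span2_def by (auto intro!: exI[of _ 0])

lemma basis_elem_in_H21: "(\<lambda>g k a b. c * basis_elem n g k a b) \<in> H21 n"
  unfolding H21_def
proof (intro CollectI allI conjI impI)
  fix g :: "nat \<Rightarrow> nat"
  show "(\<lambda>k a b. c * basis_elem n g k a b) \<in> H21g n g"
    using basis_elem_id_in_H21g zero_in_H21g basis_elem_nonid[of g n]
    by (cases "g = id") simp_all
  assume "\<not> g permutes {..<n}"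
  then have "g \<noteq> id"
    using permutes_id by blast
  then show "(\<lambda>k a b. c * basis_elem n g k a b) = (\<lambda>k a b. 0)"
    by (simp add: basis_elem_nonid)
qed

lemma invariant21_basis_elem: "invariant21 n (\<lambda>g k a b. c * basis_elem n g k a b)"
  unfolding invariant21_def
proof (intro allI impI ext)
  fix h g k a b
  assume h: "h permutes {..<n}"
  show "c * basis_elem n (h \<circ> g \<circ> inv h) k a b = c * basis_elem n g (inv h k) (inv h a) (inv h b)"
  proof (cases "g = id")
    case True
    then show ?thesis
      using diff_tensor_permute[OF permutes_inv[OF h]]
      by (simp add: basis_elem_id permutes_inv_o[OF h])
  next
    case False
    then show ?thesis
      using conj_eq_id_iff[OF permutes_bij[OF h]] by (simp add: basis_elem_nonid)
  qed
qed

lemma basis_elem_nonzero: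
  assumes "2 \<le> n"
  shows "basis_elem n \<noteq> (\<lambda>g k a b. 0)"
proof
  assume "basis_elem n = (\<lambda>g k a b. 0)"
  then have "diff_tensor n 0 0 1 = 0"
    by (simp add: basis_elem_id[symmetric])
  then show False
    using assms by (simp add: diff_tensor_def unitvec_def)
qed

lemma invariants_supported_on_id:
  "{(x1, x0). x1 \<in> H21 n \<and> x0 \<in> H20 n \<and> invariant21 n x1 \<and> invariant20 n x0 \<and>
      (\<forall>g. g \<noteq> id \<longrightarrow> x1 g = (\<lambda>k a b. 0) \<and> x0 g = (\<lambda>a b. 0))}
   = {((\<lambda>g k a b. c * basis_elem n g k a b), (\<lambda>g a b. 0)) | c. True}" (is "?L = ?R")
proof (intro set_eqI iffI)
  fix z
  assume "z \<in> ?L"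
  then obtain x1 x0 where z: "z = (x1, x0)" and x1: "x1 \<in> H21 n" "invariant21 n x1"
    "\<forall>g. g \<noteq> id \<longrightarrow> x1 g = (\<lambda>k a b. 0)"
    and x0: "x0 \<in> H20 n" "invariant20 n x0" "\<forall>g. g \<noteq> id \<longrightarrow> x0 g = (\<lambda>a b. 0)"
    by auto
  have "x1 = (\<lambda>g k a b. x1 id 0 0 1 * basis_elem n g k a b)"
    using x1 by (rule H21_supported_on_id_eq)
  moreover have "x0 = (\<lambda>g a b. 0)"
    using x0 by (rule H20_supported_on_id_eq)
  ultimately show "z \<in> ?R"
    unfolding z by blast
next
  fix z
  assume "z \<in> ?R"
  then obtain c where z: "z = ((\<lambda>g k a b. c * basis_elem n g k a b), (\<lambda>g a b. 0))"
    by blast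
  have "(\<lambda>g a b. 0) \<in> H20 n" "invariant20 n (\<lambda>g a b. 0)"
    using zero_in_H20g by (simp_all add: H20_def invariant20_def)
  then show "z \<in> ?L"
    unfolding z using basis_elem_in_H21 invariant21_basis_elem basis_elem_nonid by auto
qed

theorem lemma4p4:
  fixes n :: nat
  assumes "n \<ge> 3"
  shows "{(x1, x0). x1 \<in> H21 n \<and> x0 \<in> H20 n \<and> invariant21 n x1 \<and> invariant20 n x0 \<and>
            (\<forall>g. g \<noteq> id \<longrightarrow> x1 g = (\<lambda>k a b. 0) \<and> x0 g = (\<lambda>a b. 0))}
         = {((\<lambda>g k a b. c * basis_elem n g k a b), (\<lambda>g a b. 0)) | c. True}
       \<and> basis_elem n \<noteq> (\<lambda>g k a b. 0)"
  using invariants_supported_on_id basis_elem_nonzero assms by simp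

end
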